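(* Let $p>q>1$ be relatively prime integers and write $p=mq+r$ with $m\in\mathbb{N}$ and $1\le r\le q-1$. Then for every integer $k\ge 1$, the map $T_{\frac{p}{q}}\circ T_{kq}$ has an absolutely continuous invariant probability measure with density $$f_{\frac{p}{q}\circ kq}(x)=\frac{p-r}{p}\left(1+\frac{q}{p-r}\mathbf{1}_{[0,\frac{r}{q})}(x)\right),\qquad x\in[0,1),$$ which in particular does not depend on $k$.
   Context: For a real number $\gamma>1$ let $T_\gamma:[0,1)\to[0,1)$, $T_\gamma(x)=\gamma x \bmod 1$. The density is with respect to Lebesgue measure on $[0,1)$. *)

theory Defs
  imports "HOL-Probability.Probability"
begin

definition T :: "real \<Rightarrow> real \<Rightarrow> real" where
  "T \<gamma> x = frac (\<gamma> * x)"

definition unit_leb :: "real measure" where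
  "unit_leb = restrict_space lborel {0..<1}"

definition f_dens :: "int \<Rightarrow> int \<Rightarrow> int \<Rightarrow> real \<Rightarrow> real" where
  "f_dens p q r x = (real_of_int (p - r) / real_of_int p) *
     (1 + real_of_int q / real_of_int (p - r) * indicator {0..<real_of_int r / real_of_int q} x)"

definition acim :: "int \<Rightarrow> int \<Rightarrow> int \<Rightarrow> real measure" where
  "acim p q r = density unit_leb (\<lambda>x. ennreal (f_dens p q r x))"

end

(* On [0,1) the map T \<gamma> has floor \<gamma> full branches and one partial branch of length
   frac \<gamma> / \<gamma>; each branch is affine with slope \<gamma>, so T \<gamma> pushes Lebesgue measure
   forward to the density (floor \<gamma> + 1_[0, frac \<gamma>)) / \<gamma>. For \<gamma> = p/q this is exactly
   f_dens p q r. Conversely f_dens p q r is a step function whose jump r/q = kr/kq is an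
   endpoint of a branch of T (kq), which therefore maps it back to (total mass) * Lebesgue,
   i.e. to Lebesgue measure. Thus T (kq) followed by T (p/q) carries the measure with
   density f_dens to Lebesgue measure and back, whatever k is. *)

theory Submission
  imports Defs
begin

lemma T_borel_measurable [measurable]: "T \<gamma> \<in> borel_measurable borel"
  unfolding T_def[abs_def] frac_def by measurable

lemma T_in_unit_interval: "T \<gamma> x \<in> {0..<1}"
  by (simp add: T_def frac_lt_1)

lemma sets_unit_leb: "A \<in> sets unit_leb \<longleftrightarrow> A \<in> sets borel \<and> A \<subseteq> {0..<1}"
  unfolding unit_leb_def by (subst sets_restrict_space_iff) auto

lemma T_measurable_unit_leb: "T \<gamma> \<in> measurable unit_leb unit_leb"
  unfolding unit_leb_def
  by (rule measurable_restrict_space3) (use T_in_unit_interval in auto)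

lemma borel_measurable_unit_leb:
  "f \<in> borel_measurable borel \<Longrightarrow> f \<in> borel_measurable unit_leb"
  unfolding unit_leb_def by (rule measurable_restrict_space1) simp

lemma nn_integral_unit_leb:
  "(\<integral>\<^sup>+x. f x \<partial>unit_leb) = (\<integral>\<^sup>+x. indicator {0..<1} x * f x \<partial>lborel)"
  unfolding unit_leb_def by (subst nn_integral_restrict_space) (auto simp: mult.commute)

lemma prob_space_unit_leb: "prob_space unit_leb"
  by (rule prob_spaceI) (simp add: unit_leb_def emeasure_restrict_space)

lemma distr_density_unit_leb_eqI:
  fixes \<phi> :: "real \<Rightarrow> real" and f g :: "real \<Rightarrow> ennreal"
  assumes [measurable]: "f \<in> borel_measurable borel" "g \<in> borel_measurable borel"
    and \<phi>: "\<phi> \<in> measurable unit_leb unit_leb"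
    and transfer: "\<And>h. h \<in> borel_measurable borel \<Longrightarrow>
      (\<integral>\<^sup>+x. indicator {0..<1} x * (f x * h (\<phi> x)) \<partial>lborel) =
      (\<integral>\<^sup>+y. indicator {0..<1} y * (g y * h y) \<partial>lborel)"
  shows "distr (density unit_leb f) unit_leb \<phi> = density unit_leb g"
proof (rule measure_eqI)
  fix A assume "A \<in> sets (distr (density unit_leb f) unit_leb \<phi>)"
  then have A: "A \<in> sets unit_leb" by simp
  then have [measurable]: "A \<in> sets borel" by (simp add: sets_unit_leb)
  have \<phi>': "\<phi> \<in> measurable (density unit_leb f) unit_leb"
    using \<phi> by (simp add: measurable_cong_sets[OF sets_density refl])
  have "emeasure (distr (density unit_leb f) unit_leb \<phi>) A
      = (\<integral>\<^sup>+y. indicator A y \<partial>distr (density unit_leb f) unit_leb \<phi>)"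
    using A by simp
  also have "\<dots> = (\<integral>\<^sup>+x. indicator A (\<phi> x) \<partial>density unit_leb f)"
    using A \<phi>' by (intro nn_integral_distr) simp_all
  also have "\<dots> = (\<integral>\<^sup>+x. f x * indicator A (\<phi> x) \<partial>unit_leb)"
    using A by (intro nn_integral_density borel_measurable_unit_leb measurable_compose[OF \<phi>])
      (simp_all add: sets_unit_leb)
  also have "\<dots> = (\<integral>\<^sup>+y. g y * indicator A y \<partial>unit_leb)"
    unfolding nn_integral_unit_leb by (rule transfer) simp
  also have "\<dots> = emeasure (density unit_leb g) A"
    using A by (simp add: emeasure_density borel_measurable_unit_leb)
  finally show "emeasure (distr (density unit_leb f) unit_leb \<phi>) A = emeasure (density unit_leb g) A" .
qed simp

lemma nn_integral_T_branch:
  fixes \<gamma> a :: real and j :: int and h :: "real \<Rightarrow> ennreal"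
  assumes \<gamma>: "0 < \<gamma>" and a: "0 \<le> a" "a \<le> 1" and [measurable]: "h \<in> borel_measurable borel"
  shows "(\<integral>\<^sup>+x. indicator {j / \<gamma>..<(j + a) / \<gamma>} x * h (T \<gamma> x) \<partial>lborel)
       = ennreal (1 / \<gamma>) * (\<integral>\<^sup>+y. indicator {0..<a} y * h y \<partial>lborel)"
proof -
  have "(\<integral>\<^sup>+x. indicator {j / \<gamma>..<(j + a) / \<gamma>} x * h (T \<gamma> x) \<partial>lborel)
      = ennreal (1 / \<gamma>) * (\<integral>\<^sup>+y. indicator {j / \<gamma>..<(j + a) / \<gamma>} (j / \<gamma> + 1 / \<gamma> * y)
          * h (T \<gamma> (j / \<gamma> + 1 / \<gamma> * y)) \<partial>lborel)"
    using \<gamma> by (subst nn_integral_real_affine[where c = "1 / \<gamma>" and t = "j / \<gamma>"]) auto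
  also have "(\<lambda>y. indicator {j / \<gamma>..<(j + a) / \<gamma>} (j / \<gamma> + 1 / \<gamma> * y) * h (T \<gamma> (j / \<gamma> + 1 / \<gamma> * y)))
      = (\<lambda>y. indicator {0..<a} y * h y)"
  proof
    fix y
    have "\<gamma> * (j / \<gamma> + 1 / \<gamma> * y) = of_int j + y"
      using \<gamma> by (simp add: field_simps)
    then have "T \<gamma> (j / \<gamma> + 1 / \<gamma> * y) = frac y"
      by (simp add: T_def frac_add_of_int_left)
    moreover have "j / \<gamma> + 1 / \<gamma> * y \<in> {j / \<gamma>..<(j + a) / \<gamma>} \<longleftrightarrow> y \<in> {0..<a}"
      using \<gamma> by (simp add: add_divide_distrib[symmetric] divide_le_cancel divide_less_cancel)
    ultimately show "indicator {j / \<gamma>..<(j + a) / \<gamma>} (j / \<gamma> + 1 / \<gamma> * y) * h (T \<gamma> (j / \<gamma> + 1 / \<gamma> * y))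
        = indicator {0..<a} y * h y"
      using a by (auto simp: indicator_def frac_eq)
  qed
  finally show ?thesis .
qed

lemma nn_integral_T_full_branches:
  fixes \<gamma> :: real and c :: nat and h :: "real \<Rightarrow> ennreal"
  assumes \<gamma>: "0 < \<gamma>" and [measurable]: "h \<in> borel_measurable borel"
  shows "(\<integral>\<^sup>+x. indicator {0..<c / \<gamma>} x * h (T \<gamma> x) \<partial>lborel)
       = ennreal (c / \<gamma>) * (\<integral>\<^sup>+y. indicator {0..<1} y * h y \<partial>lborel)"
proof (induction c)
  case 0
  then show ?case by simp
next
  case (Suc c)
  have "{0..<Suc c / \<gamma>} = {0..<c / \<gamma>} \<union> {c / \<gamma>..<(real c + 1) / \<gamma>}"
    using \<gamma> by (subst ivl_disj_un_two(3)) (auto simp: divide_right_mono add_divide_distrib)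
  then have split: "indicator {0..<Suc c / \<gamma>} x
      = indicator {0..<c / \<gamma>} x + (indicator {c / \<gamma>..<(real c + 1) / \<gamma>} x :: ennreal)" for x
    unfolding \<open>{0..<Suc c / \<gamma>} = _\<close> by (auto simp: indicator_def)
  have branch: "(\<integral>\<^sup>+x. indicator {c / \<gamma>..<(real c + 1) / \<gamma>} x * h (T \<gamma> x) \<partial>lborel)
      = ennreal (1 / \<gamma>) * (\<integral>\<^sup>+y. indicator {0..<1} y * h y \<partial>lborel)"
    using nn_integral_T_branch[OF \<gamma>, of 1 h "int c"] by simp
  have "(\<integral>\<^sup>+x. indicator {0..<Suc c / \<gamma>} x * h (T \<gamma> x) \<partial>lborel)
      = (\<integral>\<^sup>+x. indicator {0..<c / \<gamma>} x * h (T \<gamma> x) \<partial>lborel)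
        + (\<integral>\<^sup>+x. indicator {c / \<gamma>..<(real c + 1) / \<gamma>} x * h (T \<gamma> x) \<partial>lborel)"
    unfolding split distrib_right by (rule nn_integral_add) measurable
  also have "\<dots> = (ennreal (c / \<gamma>) + ennreal (1 / \<gamma>)) * (\<integral>\<^sup>+y. indicator {0..<1} y * h y \<partial>lborel)"
    by (simp only: Suc.IH branch distrib_right)
  also have "ennreal (c / \<gamma>) + ennreal (1 / \<gamma>) = ennreal (Suc c / \<gamma>)"
    using \<gamma> by (subst ennreal_plus[symmetric]) (auto simp: add_divide_distrib)
  finally show ?case .
qed

lemma nn_integral_T_unit_interval:
  fixes \<gamma> :: real and h :: "real \<Rightarrow> ennreal"
  assumes \<gamma>: "0 < \<gamma>" and h [measurable]: "h \<in> borel_measurable borel"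
  shows "(\<integral>\<^sup>+x. indicator {0..<1} x * h (T \<gamma> x) \<partial>lborel)
       = (\<integral>\<^sup>+y. indicator {0..<1} y * (ennreal ((real_of_int \<lfloor>\<gamma>\<rfloor> + indicator {0..<frac \<gamma>} y) / \<gamma>) * h y) \<partial>lborel)"
proof -
  define M where "M = nat \<lfloor>\<gamma>\<rfloor>"
  have M: "real M = \<lfloor>\<gamma>\<rfloor>"
    using \<gamma> by (simp add: M_def)
  have "{0..<1} = {0..<M / \<gamma>} \<union> {\<lfloor>\<gamma>\<rfloor> / \<gamma>..<(\<lfloor>\<gamma>\<rfloor> + frac \<gamma>) / \<gamma>}"
    using \<gamma> by (simp add: M frac_def ivl_disj_un_two(3) divide_right_mono)
  then have split: "indicator {0..<1} x
      = indicator {0..<M / \<gamma>} x + (indicator {\<lfloor>\<gamma>\<rfloor> / \<gamma>..<(\<lfloor>\<gamma>\<rfloor> + frac \<gamma>) / \<gamma>} x :: ennreal)" for x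
    unfolding \<open>{0..<1} = _\<close> by (auto simp: indicator_def M)
  have "(\<integral>\<^sup>+x. indicator {0..<1} x * h (T \<gamma> x) \<partial>lborel)
      = (\<integral>\<^sup>+x. indicator {0..<M / \<gamma>} x * h (T \<gamma> x) \<partial>lborel)
        + (\<integral>\<^sup>+x. indicator {\<lfloor>\<gamma>\<rfloor> / \<gamma>..<(\<lfloor>\<gamma>\<rfloor> + frac \<gamma>) / \<gamma>} x * h (T \<gamma> x) \<partial>lborel)"
    unfolding split distrib_right by (rule nn_integral_add) measurable
  also have "\<dots> = ennreal (M / \<gamma>) * (\<integral>\<^sup>+y. indicator {0..<1} y * h y \<partial>lborel)
      + ennreal (1 / \<gamma>) * (\<integral>\<^sup>+y. indicator {0..<frac \<gamma>} y * h y \<partial>lborel)"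
    using nn_integral_T_full_branches[OF \<gamma> h, of M]
      nn_integral_T_branch[OF \<gamma> frac_ge_0 less_imp_le[OF frac_lt_1] h, of "\<lfloor>\<gamma>\<rfloor>"]
    by simp
  also have "\<dots> = (\<integral>\<^sup>+y. ennreal (M / \<gamma>) * (indicator {0..<1} y * h y)
      + ennreal (1 / \<gamma>) * (indicator {0..<frac \<gamma>} y * h y) \<partial>lborel)"
    by (subst nn_integral_add) (auto simp: nn_integral_cmult)
  also have "\<dots> = (\<integral>\<^sup>+y. indicator {0..<1} y * (ennreal ((real_of_int \<lfloor>\<gamma>\<rfloor> + indicator {0..<frac \<gamma>} y) / \<gamma>) * h y) \<partial>lborel)"
  proof (rule nn_integral_cong)
    fix y
    show "ennreal (M / \<gamma>) * (indicator {0..<1} y * h y) + ennreal (1 / \<gamma>) * (indicator {0..<frac \<gamma>} y * h y)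
        = indicator {0..<1} y * (ennreal ((real_of_int \<lfloor>\<gamma>\<rfloor> + indicator {0..<frac \<gamma>} y) / \<gamma>) * h y)"
      using \<gamma> frac_lt_1[of \<gamma>]
      by (auto simp: M indicator_def add_divide_distrib ennreal_plus distrib_right mult.assoc)
  qed
  finally show ?thesis .
qed

lemma distr_unit_leb_T:
  assumes "0 < \<gamma>"
  shows "distr unit_leb unit_leb (T \<gamma>)
       = density unit_leb (\<lambda>y. ennreal ((real_of_int \<lfloor>\<gamma>\<rfloor> + indicator {0..<frac \<gamma>} y) / \<gamma>))"
proof -
  have "distr (density unit_leb (\<lambda>_. 1)) unit_leb (T \<gamma>)
      = density unit_leb (\<lambda>y. ennreal ((real_of_int \<lfloor>\<gamma>\<rfloor> + indicator {0..<frac \<gamma>} y) / \<gamma>))"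
  proof (rule distr_density_unit_leb_eqI)
    fix h :: "real \<Rightarrow> ennreal" assume "h \<in> borel_measurable borel"
    then show "(\<integral>\<^sup>+x. indicator {0..<1} x * (1 * h (T \<gamma> x)) \<partial>lborel)
        = (\<integral>\<^sup>+y. indicator {0..<1} y * (ennreal ((real_of_int \<lfloor>\<gamma>\<rfloor> + indicator {0..<frac \<gamma>} y) / \<gamma>) * h y) \<partial>lborel)"
      using nn_integral_T_unit_interval[OF assms] by simp
  qed (simp_all add: T_measurable_unit_leb)
  then show ?thesis by (simp add: density_1)
qed

lemma distr_step_density_T_nat:
  fixes n c :: nat and a b :: ennreal
  assumes n: "0 < n" and c: "c \<le> n"
  shows "distr (density unit_leb (\<lambda>x. a + b * indicator {0..<c / n} x)) unit_leb (T n)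
       = density unit_leb (\<lambda>_. a + b * ennreal (c / n))"
proof (rule distr_density_unit_leb_eqI)
  fix h :: "real \<Rightarrow> ennreal" assume h [measurable]: "h \<in> borel_measurable borel"
  have n': "0 < real n" using n by simp
  have below_1: "x < 1" if "x < c / n" for x :: real
    using that c n' by (smt (verit) divide_le_eq_1_pos of_nat_mono)
  \<comment> \<open>The cut point \<open>c / n\<close> is a branch endpoint of \<open>T n\<close>, so both pieces consist of full branches.\<close>
  have cut: "indicator {0..<1} x * (a + b * indicator {0..<c / n} x)
      = a * indicator {0..<n / n} x + b * (indicator {0..<c / n} x :: ennreal)" for x
    using n' by (auto simp: indicator_def dest: below_1)
  have "(\<integral>\<^sup>+x. indicator {0..<1} x * ((a + b * indicator {0..<c / n} x) * h (T n x)) \<partial>lborel)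
      = (\<integral>\<^sup>+x. a * (indicator {0..<n / n} x * h (T n x))
          + b * (indicator {0..<c / n} x * h (T n x)) \<partial>lborel)"
    by (intro nn_integral_cong) (metis (no_types, lifting) cut distrib_right mult.assoc)
  also have "\<dots> = a * (\<integral>\<^sup>+x. indicator {0..<n / n} x * h (T n x) \<partial>lborel)
      + b * (\<integral>\<^sup>+x. indicator {0..<c / n} x * h (T n x) \<partial>lborel)"
    by (subst nn_integral_add) (auto simp: nn_integral_cmult)
  also have "\<dots> = (a + b * ennreal (c / n)) * (\<integral>\<^sup>+y. indicator {0..<1} y * h y \<partial>lborel)"
    unfolding nn_integral_T_full_branches[OF n' h] using n' by (simp add: distrib_right mult.assoc)
  also have "\<dots> = (\<integral>\<^sup>+y. indicator {0..<1} y * ((a + b * ennreal (c / n)) * h y) \<partial>lborel)"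
    by (subst nn_integral_cmult[symmetric]) (auto simp: mult.left_commute)
  finally show "(\<integral>\<^sup>+x. indicator {0..<1} x * ((a + b * indicator {0..<c / n} x) * h (T n x)) \<partial>lborel)
      = (\<integral>\<^sup>+y. indicator {0..<1} y * ((a + b * ennreal (c / n)) * h y) \<partial>lborel)" .
qed (simp_all add: T_measurable_unit_leb)

lemma f_dens_eq_T_image_density:
  fixes p q r :: int
  assumes q: "0 < q" and "q \<le> p" and r: "r = p mod q"
  shows "f_dens p q r x
       = (real_of_int \<lfloor>p / q\<rfloor> + indicator {0..<frac (p / q)} x) / (p / q)"
proof -
  have floor: "\<lfloor>real_of_int p / real_of_int q\<rfloor> = p div q"
    by (rule floor_divide_of_int_eq)
  have "p = q * (p div q) + r"
    using r by simp
  then have p_eq: "real_of_int p = q * (p div q) + r"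
    by (metis of_int_add of_int_mult)
  then have pr: "real_of_int (p - r) = q * (p div q)"
    by simp
  have "frac (p / q) = p / q - (p div q)"
    unfolding frac_def floor ..
  also have "\<dots> = r / q"
    using q p_eq by (simp add: field_simps)
  finally have frac: "frac (p / q) = r / q" .
  have "0 < p" "0 < p div q"
    using assms by (simp_all add: pos_imp_zdiv_pos_iff)
  then show ?thesis
    using q unfolding f_dens_def floor frac pr by (simp add: field_simps)
qed

lemma f_dens_eq_step:
  fixes p q r :: int
  assumes q: "0 < q" and "q \<le> p" and r: "r = p mod q"
  shows "ennreal (f_dens p q r x)
       = ennreal ((p - r) / p) + ennreal (q / p) * indicator {0..<r / q} x"
proof -
  have "r < q" "q \<le> p"
    using assms by simp_all
  then have "real_of_int p \<noteq> 0" "real_of_int p - real_of_int r \<noteq> 0"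
    using q by linarith+
  then have "f_dens p q r x = (p - r) / p + q / p * indicator {0..<r / q} x"
    by (simp add: f_dens_def field_simps)
  moreover have "0 \<le> (real_of_int p - real_of_int r) / real_of_int p" "0 \<le> real_of_int q / real_of_int p"
    using \<open>r < q\<close> \<open>q \<le> p\<close> q by simp_all
  ultimately show ?thesis
    by (simp add: ennreal_plus indicator_def)
qed

lemma acim_eq_distr_T:
  fixes p q r :: int
  assumes "0 < q" "q \<le> p" "r = p mod q"
  shows "acim p q r = distr unit_leb unit_leb (T (p / q))"
  using assms unfolding acim_def
  by (simp add: distr_unit_leb_T f_dens_eq_T_image_density)

lemma distr_acim_T_mult:
  fixes p q r k :: int
  assumes q: "0 < q" and p: "q \<le> p" and r: "r = p mod q" and k: "0 < k"
  shows "distr (acim p q r) unit_leb (T (of_int (k * q))) = unit_leb"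
proof -
  define n where "n = nat (k * q)"
  define c where "c = nat (k * r)"
  have n: "0 < n" "real n = of_int (k * q)"
    using q k by (simp_all add: n_def)
  have "0 \<le> r" "r < q"
    using q r by simp_all
  then have c: "c \<le> n" "real c / real n = r / q"
    using q k by (simp_all add: n_def c_def mult_left_mono nat_mono)
  have "ennreal (q / p) * ennreal (r / q) = ennreal (r / p)"
    using q p \<open>0 \<le> r\<close> by (simp add: ennreal_mult[symmetric])
  moreover have "ennreal ((p - r) / p) + ennreal (r / p) = 1"
    using q p \<open>0 \<le> r\<close> \<open>r < q\<close>
    by (subst ennreal_plus[symmetric]) (simp_all add: add_divide_distrib[symmetric])
  ultimately have "ennreal ((p - r) / p) + ennreal (q / p) * ennreal (c / n) = 1"
    unfolding c(2) by simp
  moreover have "acim p q r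
      = density unit_leb (\<lambda>x. ennreal ((p - r) / p) + ennreal (q / p) * indicator {0..<c / n} x)"
    unfolding acim_def f_dens_eq_step[OF assms(1-3)] c(2) ..
  ultimately show ?thesis
    using distr_step_density_T_nat[OF n(1) c(1)] by (simp add: n(2) density_1)
qed

theorem proposition2p1:
  fixes p q m r k :: int
  assumes "1 < q" and "q < p" and "coprime p q"
    and "0 \<le> m" and "p = m * q + r" and "1 \<le> r" and "r \<le> q - 1"
    and "1 \<le> k"
  shows "prob_space (acim p q r) \<and>
    (T (real_of_int p / real_of_int q) \<circ> T (real_of_int (k * q)))
      \<in> measurable (acim p q r) (acim p q r) \<and>
    distr (acim p q r) (acim p q r)
      (T (real_of_int p / real_of_int q) \<circ> T (real_of_int (k * q))) = acim p q r"
proof -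
  let ?S = "T (real_of_int p / real_of_int q) \<circ> T (real_of_int (k * q))"
  have q: "0 < q" "q \<le> p" and k: "0 < k" and r: "r = p mod q"
    using assms by simp_all
  have acim_T: "acim p q r = distr unit_leb unit_leb (T (p / q))"
    by (rule acim_eq_distr_T[OF q r])
  have sets_acim: "sets (acim p q r) = sets unit_leb"
    by (simp add: acim_def)
  have T_acim: "T \<gamma> \<in> measurable (acim p q r) unit_leb" for \<gamma>
    using T_measurable_unit_leb by (simp add: measurable_cong_sets[OF sets_acim refl])
  have S: "?S \<in> measurable (acim p q r) (acim p q r)"
    using measurable_comp[OF T_acim T_measurable_unit_leb]
    by (simp add: measurable_cong_sets[OF refl sets_acim])
  have "distr (acim p q r) (acim p q r) ?S = distr (acim p q r) unit_leb ?S"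
    by (rule distr_cong) (simp_all add: sets_acim)
  also have "\<dots> = distr (distr (acim p q r) unit_leb (T (k * q))) unit_leb (T (p / q))"
    by (rule distr_distr[OF T_measurable_unit_leb T_acim, symmetric])
  also have "\<dots> = acim p q r"
    unfolding distr_acim_T_mult[OF q r k] by (rule acim_T[symmetric])
  finally have "distr (acim p q r) (acim p q r) ?S = acim p q r" .
  moreover have "prob_space (acim p q r)"
    unfolding acim_T by (rule prob_space.prob_space_distr[OF prob_space_unit_leb T_measurable_unit_leb])
  ultimately show ?thesis
    using S by blast
qed

end
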